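(* Let $X$ be a real Banach space and $A: X\rightrightarrows X^*$ maximal monotone. For every $w\in\mathrm{dom}(A)$, $v^*\in\mathrm{Im}(A)$ and $(x,x^* )\in X\times X^*$: (i) $F_A(x,v^* )\le g_{A,v^*}^*(x)\le P_A(x,v^* )$; (ii) $F_A(w,x^* )\le f_{A,w}^*(x^* )\le P_A(w,x^* )$.
   Context: $F_A(x,x^* )=\sup_{(y,y^* )\in\mathrm{Gr}(A)}\{\langle y,x^*\rangle+\langle x,y^*\rangle-\langle y,y^*\rangle\}$. Let $\phi(x,x^* )=\langle x,x^*\rangle$ if $(x,x^* )\in\mathrm{Gr}(A)$ and $+\infty$ otherwise; $P_A$ is the restriction to $X\times X^*$ of the biconjugate $\phi^{**}$. $f_{A,w}(x)=\inf_{a^*\in X^*}\{P_A(x,a^* )-\langle w,a^*\rangle\}$ and $g_{A,v^*}(x^* )=\inf_{a\in X}\{P_A(a,x^* )-\langle a,v^*\rangle\}$. The conjugates are $f_{A,w}^*(x^* )=\sup_{y\in X}\{\langle y,x^*\rangle-f_{A,w}(y)\}$ and $g_{A,v^*}^*(x)=\sup_{y^*\in X^*}\{\langle x,y^*\rangle-g_{A,v^*}(y^* )\}$. *)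

theory Defs
  imports "HOL-Analysis.Analysis"
begin

(* X is a real Banach space 'a::banach; X* is 'a \<Rightarrow>\<^sub>L real; X-bidual is ('a \<Rightarrow>\<^sub>L real) \<Rightarrow>\<^sub>L real.
  A multivalued operator A : X \<rightrightarrows> X* is identified with its graph, a set of pairs. *)

definition monotone_op :: "('a::real_normed_vector \<times> ('a \<Rightarrow>\<^sub>L real)) set \<Rightarrow> bool" where
  "monotone_op A \<longleftrightarrow> (\<forall>(x,x')\<in>A. \<forall>(y,y')\<in>A. 0 \<le> blinfun_apply (x' - y') (x - y))"

definition maximal_monotone :: "('a::real_normed_vector \<times> ('a \<Rightarrow>\<^sub>L real)) set \<Rightarrow> bool" where
  "maximal_monotone A \<longleftrightarrow> monotone_op A \<and> (\<forall>B. monotone_op B \<and> A \<subseteq> B \<longrightarrow> B = A)"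

definition fitz :: "('a::real_normed_vector \<times> ('a \<Rightarrow>\<^sub>L real)) set \<Rightarrow> 'a \<Rightarrow> ('a \<Rightarrow>\<^sub>L real) \<Rightarrow> ereal" where
  "fitz A x x' = (SUP p\<in>A. ereal (blinfun_apply x' (fst p) + blinfun_apply (snd p) x
                                   - blinfun_apply (snd p) (fst p)))"

definition phiA :: "('a::real_normed_vector \<times> ('a \<Rightarrow>\<^sub>L real)) set \<Rightarrow> 'a \<Rightarrow> ('a \<Rightarrow>\<^sub>L real) \<Rightarrow> ereal" where
  "phiA A x x' = (if (x, x') \<in> A then ereal (blinfun_apply x' x) else \<infinity>)"

definition phiA_conj :: "('a::real_normed_vector \<times> ('a \<Rightarrow>\<^sub>L real)) set
     \<Rightarrow> ('a \<Rightarrow>\<^sub>L real) \<Rightarrow> (('a \<Rightarrow>\<^sub>L real) \<Rightarrow>\<^sub>L real) \<Rightarrow> ereal" where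
  "phiA_conj A y' y'' = (SUP p\<in>(UNIV :: ('a \<times> ('a \<Rightarrow>\<^sub>L real)) set).
       ereal (blinfun_apply y' (fst p) + blinfun_apply y'' (snd p)) - phiA A (fst p) (snd p))"

(* P_A: the biconjugate of phi restricted to X times X-dual via the canonical embeddings. *)
definition PA :: "('a::real_normed_vector \<times> ('a \<Rightarrow>\<^sub>L real)) set \<Rightarrow> 'a \<Rightarrow> ('a \<Rightarrow>\<^sub>L real) \<Rightarrow> ereal" where
  "PA A x x' = (SUP q\<in>(UNIV :: (('a \<Rightarrow>\<^sub>L real) \<times> (('a \<Rightarrow>\<^sub>L real) \<Rightarrow>\<^sub>L real)) set).
       ereal (blinfun_apply (fst q) x + blinfun_apply (snd q) x') - phiA_conj A (fst q) (snd q))"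

definition fAw :: "('a::real_normed_vector \<times> ('a \<Rightarrow>\<^sub>L real)) set \<Rightarrow> 'a \<Rightarrow> 'a \<Rightarrow> ereal" where
  "fAw A w x = (INF a'\<in>(UNIV :: ('a \<Rightarrow>\<^sub>L real) set). PA A x a' - ereal (blinfun_apply a' w))"

definition gAv :: "('a::real_normed_vector \<times> ('a \<Rightarrow>\<^sub>L real)) set \<Rightarrow> ('a \<Rightarrow>\<^sub>L real) \<Rightarrow> ('a \<Rightarrow>\<^sub>L real) \<Rightarrow> ereal" where
  "gAv A v' x' = (INF a\<in>(UNIV :: 'a set). PA A a x' - ereal (blinfun_apply v' a))"

definition fAw_conj :: "('a::real_normed_vector \<times> ('a \<Rightarrow>\<^sub>L real)) set \<Rightarrow> 'a \<Rightarrow> ('a \<Rightarrow>\<^sub>L real) \<Rightarrow> ereal" where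
  "fAw_conj A w x' = (SUP y\<in>(UNIV :: 'a set). ereal (blinfun_apply x' y) - fAw A w y)"

definition gAv_conj :: "('a::real_normed_vector \<times> ('a \<Rightarrow>\<^sub>L real)) set \<Rightarrow> ('a \<Rightarrow>\<^sub>L real) \<Rightarrow> 'a \<Rightarrow> ereal" where
  "gAv_conj A v' x = (SUP y'\<in>(UNIV :: ('a \<Rightarrow>\<^sub>L real) set). ereal (blinfun_apply y' x) - gAv A v' y')"

end

theory Submission
  imports Defs
begin

(* Both halves of the theorem rest on two facts about P_A for monotone A (primes mark dual
   vectors).  First, P_A lies below the duality pairing on the graph, since a biconjugate lies
   below the function.  Second, the cross inequality
     <x,y'> + <a,v'> <= P_A(x,v') + P_A(a,y'):
   testing the supremum defining P_A(x,v') at (y', a) gives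
   P_A(x,v') >= <x,y'> + <a,v'> - F_A(a,y'), and F_A <= P_A by monotonicity.
   The lower bounds then follow by testing the conjugates at points of the graph, the upper
   bounds by bounding the partial infima g_{A,v'} and f_{A,w} from below with the cross
   inequality.  Both are instances of one statement about an abstract pairing c and
   function P, applied to the duality pairing and to its transpose. *)

lemma SUP_diff_INF_le_of_cross_bound:
  fixes c :: "'x \<Rightarrow> 'y \<Rightarrow> real" and P :: "'x \<Rightarrow> 'y \<Rightarrow> ereal"
  assumes cross: "\<And>y a. ereal (c x y + c a v) \<le> P x v + P a y"
  shows "(SUP y. ereal (c x y) - (INF a. P a y - ereal (c a v))) \<le> P x v"
proof (rule SUP_least)
  fix y :: 'y
  show "ereal (c x y) - (INF a. P a y - ereal (c a v)) \<le> P x v"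
  proof (cases "P x v")
    case (real p)
    have "ereal (c x y - p) \<le> (INF a. P a y - ereal (c a v))"
    proof (rule INF_greatest)
      fix a :: 'x
      show "ereal (c x y - p) \<le> P a y - ereal (c a v)"
        using cross[of y a] real by (cases "P a y") auto
    qed
    then show ?thesis
      using real by (cases "INF a. P a y - ereal (c a v)") auto
  next
    case MInf
    then show ?thesis
      using cross[of v x] by simp
  qed simp
qed

lemma le_SUP_diff_INF:
  fixes c :: "'x \<Rightarrow> 'y \<Rightarrow> real" and P :: "'x \<Rightarrow> 'y \<Rightarrow> ereal"
  assumes "P b y \<le> ereal (c b y)"
  shows "ereal (c b v + c x y - c b y) \<le> (SUP y. ereal (c x y) - (INF a. P a y - ereal (c a v)))"
proof -
  have "(INF a. P a y - ereal (c a v)) \<le> P b y - ereal (c b v)"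
    by (rule INF_lower) simp
  also have "\<dots> \<le> ereal (c b y - c b v)"
    using assms by (cases "P b y") auto
  finally have "ereal (c b v + c x y - c b y) \<le> ereal (c x y) - (INF a. P a y - ereal (c a v))"
    by (cases "INF a. P a y - ereal (c a v)") auto
  also have "\<dots> \<le> (SUP y. ereal (c x y) - (INF a. P a y - ereal (c a v)))"
    by (rule SUP_upper) simp
  finally show ?thesis .
qed

definition bidual_embedding :: "'a::real_normed_vector \<Rightarrow> ('a \<Rightarrow>\<^sub>L real) \<Rightarrow>\<^sub>L real" where
  "bidual_embedding a = Blinfun (\<lambda>f. blinfun_apply f a)"

lemma bidual_embedding_apply [simp]: "blinfun_apply (bidual_embedding a) f = blinfun_apply f a"
  unfolding bidual_embedding_def by (simp add: bounded_linear_Blinfun_apply)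

lemma PA_le_pairing_on_graph:
  assumes "(b, b') \<in> A"
  shows "PA A b b' \<le> ereal (blinfun_apply b' b)"
  unfolding PA_def
proof (rule SUP_least)
  fix q :: "('a \<Rightarrow>\<^sub>L real) \<times> (('a \<Rightarrow>\<^sub>L real) \<Rightarrow>\<^sub>L real)"
  let ?r = "blinfun_apply (fst q) b + blinfun_apply (snd q) b'"
  have "ereal ?r - phiA A b b' \<le> phiA_conj A (fst q) (snd q)"
    unfolding phiA_conj_def by (rule SUP_upper2[where i = "(b, b')"]) auto
  then show "ereal ?r - phiA_conj A (fst q) (snd q) \<le> ereal (blinfun_apply b' b)"
    using assms by (cases "phiA_conj A (fst q) (snd q)") (auto simp: phiA_def)
qed

lemma phiA_conj_bidual_embedding_le_fitz: "phiA_conj A y' (bidual_embedding y) \<le> fitz A y y'"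
  unfolding phiA_conj_def
proof (rule SUP_least)
  fix p :: "'a \<times> ('a \<Rightarrow>\<^sub>L real)"
  show "ereal (blinfun_apply y' (fst p) + blinfun_apply (bidual_embedding y) (snd p))
          - phiA A (fst p) (snd p) \<le> fitz A y y'"
  proof (cases "p \<in> A")
    case True
    have "ereal (blinfun_apply y' (fst p) + blinfun_apply (snd p) y - blinfun_apply (snd p) (fst p))
          \<le> fitz A y y'"
      unfolding fitz_def by (rule SUP_upper[OF True])
    then show ?thesis
      using True by (simp add: phiA_def)
  qed (simp add: phiA_def)
qed

lemma fitz_le_pairing_on_graph:
  assumes "monotone_op A" and "(b, b') \<in> A"
  shows "fitz A b b' \<le> ereal (blinfun_apply b' b)"
  unfolding fitz_def
proof (rule SUP_least)
  fix p assume "p \<in> A"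
  then obtain c c' where p: "p = (c, c')" and "(c, c') \<in> A"
    by (cases p) auto
  then have "0 \<le> blinfun_apply (c' - b') (c - b)"
    using assms unfolding monotone_op_def by fast
  then show "ereal (blinfun_apply b' (fst p) + blinfun_apply (snd p) b - blinfun_apply (snd p) (fst p))
          \<le> ereal (blinfun_apply b' b)"
    using p by (simp add: blinfun.diff_left blinfun.diff_right)
qed

lemma pairings_minus_fitz_le_PA:
  "ereal (blinfun_apply y' x + blinfun_apply v' a) - fitz A a y' \<le> PA A x v'"
proof -
  have "ereal (blinfun_apply y' x + blinfun_apply v' a) - fitz A a y'
      \<le> ereal (blinfun_apply y' x + blinfun_apply (bidual_embedding a) v')
          - phiA_conj A y' (bidual_embedding a)"
    using phiA_conj_bidual_embedding_le_fitz[of A y' a] by (simp add: ereal_minus_mono)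
  also have "\<dots> \<le> PA A x v'"
    unfolding PA_def by (rule SUP_upper2[where i = "(y', bidual_embedding a)"]) auto
  finally show ?thesis .
qed

lemma fitz_le_PA:
  assumes "monotone_op A"
  shows "fitz A a y' \<le> PA A a y'"
  unfolding fitz_def
proof (rule SUP_least)
  fix p assume "p \<in> A"
  then obtain b b' where p: "p = (b, b')" and "(b, b') \<in> A"
    by (cases p) auto
  then have "ereal (blinfun_apply b' a + blinfun_apply y' b) - ereal (blinfun_apply b' b)
      \<le> ereal (blinfun_apply b' a + blinfun_apply y' b) - fitz A b b'"
    by (intro ereal_minus_mono order_refl fitz_le_pairing_on_graph assms)
  also have "\<dots> \<le> PA A a y'"
    by (rule pairings_minus_fitz_le_PA)
  finally show "ereal (blinfun_apply y' (fst p) + blinfun_apply (snd p) a - blinfun_apply (snd p) (fst p))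
          \<le> PA A a y'"
    using p by (simp add: add.commute)
qed

lemma fitz_neq_MInfty:
  assumes "A \<noteq> {}"
  shows "fitz A a y' \<noteq> -\<infinity>"
proof -
  obtain p where "p \<in> A"
    using assms by blast
  then have "ereal (blinfun_apply y' (fst p) + blinfun_apply (snd p) a - blinfun_apply (snd p) (fst p))
      \<le> fitz A a y'"
    unfolding fitz_def by (rule SUP_upper)
  then show ?thesis
    by auto
qed

lemma PA_cross_inequality:
  assumes "monotone_op A" and "A \<noteq> {}"
  shows "ereal (blinfun_apply y' x + blinfun_apply v' a) \<le> PA A x v' + PA A a y'"
proof -
  have "ereal (blinfun_apply y' x + blinfun_apply v' a) \<le> PA A x v' + fitz A a y'"
    using pairings_minus_fitz_le_PA[of y' x v' a A] fitz_neq_MInfty[OF assms(2)]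
    by (auto simp: ereal_minus_le_iff)
  also have "\<dots> \<le> PA A x v' + PA A a y'"
    using fitz_le_PA[OF assms(1)] by (rule add_left_mono)
  finally show ?thesis .
qed

theorem lemma3p4:
  fixes A :: "('a::banach \<times> ('a \<Rightarrow>\<^sub>L real)) set"
    and w x :: 'a and v' x' :: "'a \<Rightarrow>\<^sub>L real"
  assumes "maximal_monotone A"
    and "w \<in> Domain A"
    and "v' \<in> Range A"
  shows "fitz A x v' \<le> gAv_conj A v' x \<and> gAv_conj A v' x \<le> PA A x v'
       \<and> fitz A w x' \<le> fAw_conj A w x' \<and> fAw_conj A w x' \<le> PA A w x'"
proof -
  have mono: "monotone_op A"
    using assms(1) by (simp add: maximal_monotone_def)
  have cross: "ereal (blinfun_apply y' y + blinfun_apply b' b) \<le> PA A y b' + PA A b y'" for y b y' b'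
    using PA_cross_inequality[OF mono] assms(3) by blast
  have "fitz A x v' \<le> gAv_conj A v' x"
    unfolding fitz_def gAv_conj_def gAv_def
    using le_SUP_diff_INF[where c = "\<lambda>x y. blinfun_apply y x" and P = "PA A", OF PA_le_pairing_on_graph]
    by (auto intro!: SUP_least simp: add.commute)
  moreover have "gAv_conj A v' x \<le> PA A x v'"
    unfolding gAv_conj_def gAv_def by (rule SUP_diff_INF_le_of_cross_bound) (rule cross)
  moreover have "fitz A w x' \<le> fAw_conj A w x'"
    unfolding fitz_def fAw_conj_def fAw_def
    using le_SUP_diff_INF[where c = blinfun_apply and P = "\<lambda>y' y. PA A y y'", OF PA_le_pairing_on_graph]
    by (auto intro!: SUP_least simp: add.commute)
  moreover have "fAw_conj A w x' \<le> PA A w x'"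
    unfolding fAw_conj_def fAw_def by (rule SUP_diff_INF_le_of_cross_bound) (metis cross add.commute)
  ultimately show ?thesis
    by blast
qed

end
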